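(* Let $P$ and $S$ be strings over a totally ordered alphabet and let $q\ge 0$ be an integer such that both $P$ and $S$ have length at least $q+1$. Assume that $\mathcal{PP}_P(i)=\mathcal{PP}_S(i)$ for all $1\le i\le q$, i.e. $P[1..q]$ and $S[1..q]$ have the same prefix-parent representations. Then $P[1..q+1]$ and $S[1..q+1]$ have the same prefix-parent representations (i.e. additionally $\mathcal{PP}_P(q+1)=\mathcal{PP}_S(q+1)$) if and only if $$S[\mathcal{PP}_P(q+1)] \preceq S[q+1] \preceq S[\mathcal{PC}_P(q+1)].$$
   Context: A string $S$ is a finite sequence $S[1],S[2],\dots$ over an alphabet $\Sigma$ with a total order $<$; $S[i..j]$ denotes the substring $S[i]S[i+1]\cdots S[j]$ (empty if $i>j$). For positions $i,j$ of $S$, write $S[i]\prec S[j]$ iff either $S[i]<S[j]$, or $S[i]$ and $S[j]$ have the same value and $i<j$; write $S[i]\preceq S[j]$ iff $S[i]\prec S[j]$ or $i=j$. Minimum elements are taken with respect to $\prec$ (so among equal minimal values the leftmost position is the minimum). Prefix-parent representation: $\mathcal{PP}_S(i)=\max\{j: 1\le j<i,\ S[j]\prec S[i]\}$ if such $j$ exists, and $\mathcal{PP}_S(i)=i$ otherwise. Prefix-child representation: $\mathcal{PC}_S(1)=1$, and for $i\ge 2$: if $\mathcal{PP}_S(i)=i$, then $\mathcal{PC}_S(i)$ is the index $j\in[1,i-1]$ such that $S[j]$ is the minimum of $S[1..i-1]$; if $\mathcal{PP}_S(i)=i-1$, then $\mathcal{PC}_S(i)=i$; if $\mathcal{PP}_S(i)<i-1$,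 then $\mathcal{PC}_S(i)$ is the index $j$ with $\mathcal{PP}_S(i)<j<i$ such that $S[j]$ is the minimum of $S[\mathcal{PP}_S(i)+1..i-1]$. *)

theory Defs
  imports Main
begin

text \<open>Strings are lists over a linearly ordered alphabet, accessed 1-based:
  position i of S is S ! (i - 1).\<close>

definition at :: "'a list \<Rightarrow> nat \<Rightarrow> 'a" where
  "at S i = S ! (i - 1)"

definition prec :: "'a::linorder list \<Rightarrow> nat \<Rightarrow> nat \<Rightarrow> bool" where
  "prec S i j \<longleftrightarrow> at S i < at S j \<or> (at S i = at S j \<and> i < j)"

definition preceq :: "'a::linorder list \<Rightarrow> nat \<Rightarrow> nat \<Rightarrow> bool" where
  "preceq S i j \<longleftrightarrow> prec S i j \<or> i = j"

definition PP :: "'a::linorder list \<Rightarrow> nat \<Rightarrow> nat" where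
  "PP S i = (if \<exists>j. 1 \<le> j \<and> j < i \<and> prec S j i
             then Max {j. 1 \<le> j \<and> j < i \<and> prec S j i} else i)"

definition minpos :: "'a::linorder list \<Rightarrow> nat \<Rightarrow> nat \<Rightarrow> nat" where
  "minpos S a b = (THE j. a \<le> j \<and> j \<le> b \<and> (\<forall>k. a \<le> k \<and> k \<le> b \<longrightarrow> preceq S j k))"

definition PC :: "'a::linorder list \<Rightarrow> nat \<Rightarrow> nat" where
  "PC S i = (if i = 1 then 1
             else if PP S i = i then minpos S 1 (i - 1)
             else if PP S i = i - 1 then i
             else minpos S (PP S i + 1) (i - 1))"

end

theory Submission
  imports Defs "HOL-Library.Product_Lexorder"
begin

text \<open>Both sides say the same thing about S[q+1] once p = PP P (q+1) is fixed: S[p] must not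
  exceed S[q+1], and every letter strictly between p and q+1 must exceed S[q+1]. The latter holds
  iff the leftmost minimum S[c] of S[p+1..q] exceeds S[q+1], and c = PC P (q+1) computed in P is
  the same position for S: the leftmost minimum is the last strict left-to-right minimum of the
  factor, and whether a position is such a minimum is read off its prefix parent.\<close>

definition left_min :: "'a::linorder list \<Rightarrow> nat \<Rightarrow> nat \<Rightarrow> bool" where
  "left_min S a i \<longleftrightarrow> (\<forall>j. a \<le> j \<and> j < i \<longrightarrow> at S i < at S j)"

lemma prec_less_iff: "j < i \<Longrightarrow> prec S j i \<longleftrightarrow> at S j \<le> at S i"
  by (auto simp: prec_def)

lemma preceq_iff_lex: "preceq S i j \<longleftrightarrow> (at S i, i) \<le> (at S j, j)"
  by (auto simp: preceq_def prec_def)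

lemma preceq_greater_iff: "j < i \<Longrightarrow> preceq S i j \<longleftrightarrow> at S i < at S j"
  by (auto simp: preceq_iff_lex)

lemma PP_take:
  assumes "i \<le> n"
  shows "PP (take n S) i = PP S i"
proof -
  have "{j. 1 \<le> j \<and> j < i \<and> prec (take n S) j i} = {j. 1 \<le> j \<and> j < i \<and> prec S j i}"
    using assms by (auto simp: prec_def at_def)
  then show ?thesis
    unfolding PP_def by (metis (no_types, lifting) mem_Collect_eq)
qed

lemma PP_cases:
  obtains "PP S i = i" "left_min S 1 i"
  | "1 \<le> PP S i" "PP S i < i" "at S (PP S i) \<le> at S i" "left_min S (PP S i + 1) i"
proof (cases "\<exists>j. 1 \<le> j \<and> j < i \<and> prec S j i")
  case False
  then have "PP S i = i"
    unfolding PP_def by (simp only: if_False)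
  moreover have "left_min S 1 i"
    using False by (auto simp: left_min_def prec_less_iff not_le)
  ultimately show ?thesis
    using that(1) by blast
next
  case True
  define X where "X = {j. 1 \<le> j \<and> j < i \<and> prec S j i}"
  have "finite X"
    unfolding X_def by (rule finite_subset[of _ "{..<i}"]) auto
  moreover have "X \<noteq> {}"
    using True by (auto simp: X_def)
  ultimately have max: "Max X \<in> X" and above: "\<And>j. j \<in> X \<Longrightarrow> j \<le> Max X"
    by auto
  have PP: "PP S i = Max X"
    using True unfolding PP_def X_def by (simp only: if_True)
  have "left_min S (Max X + 1) i"
    unfolding left_min_def
  proof (intro allI impI)
    fix j
    assume j: "Max X + 1 \<le> j \<and> j < i"
    then have "j \<notin> X"
      using above by fastforce
    with j show "at S i < at S j"
      by (auto simp: X_def prec_less_iff)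
  qed
  moreover have "1 \<le> Max X" "Max X < i" "at S (Max X) \<le> at S i"
    using max by (auto simp: X_def prec_less_iff)
  ultimately show ?thesis
    using that(2) unfolding PP by blast
qed

lemma PP_eq_self_iff: "PP S i = i \<longleftrightarrow> left_min S 1 i"
  by (cases S i rule: PP_cases) (auto simp: left_min_def)

lemma PP_eq_iff:
  assumes "1 \<le> p" "p < i"
  shows "PP S i = p \<longleftrightarrow> at S p \<le> at S i \<and> left_min S (p + 1) i"
proof (cases S i rule: PP_cases)
  case 1
  then show ?thesis
    using assms by (auto simp: left_min_def)
next
  case 2
  show ?thesis
  proof
    assume "at S p \<le> at S i \<and> left_min S (p + 1) i"
    with 2 assms show "PP S i = p"
      unfolding left_min_def by (metis Suc_eq_plus1 Suc_leI linorder_neqE_nat not_le)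
  qed (use 2 in auto)
qed

lemma left_min_iff_PP:
  assumes "1 \<le> a" "a \<le> i"
  shows "left_min S a i \<longleftrightarrow> PP S i < a \<or> PP S i = i"
proof (cases S i rule: PP_cases)
  case 2
  show ?thesis
  proof
    assume "left_min S a i"
    with 2 show "PP S i < a \<or> PP S i = i"
      unfolding left_min_def by (meson leD linorder_le_less_linear)
  next
    assume "PP S i < a \<or> PP S i = i"
    with 2 assms show "left_min S a i"
      by (auto simp: left_min_def)
  qed
qed (use assms in \<open>auto simp: left_min_def\<close>)

lemma minpos:
  assumes "a \<le> b"
  shows "a \<le> minpos S a b" "minpos S a b \<le> b"
    and "\<And>k. a \<le> k \<Longrightarrow> k \<le> b \<Longrightarrow> preceq S (minpos S a b) k"
proof -
  define key where "key j = (at S j, j)" for j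
  define m where "m = snd (Min (key ` {a..b}))"
  have "Min (key ` {a..b}) \<in> key ` {a..b}"
    using assms by (intro Min_in) auto
  then have m: "a \<le> m" "m \<le> b" "key m = Min (key ` {a..b})"
    by (auto simp: m_def key_def)
  have least: "preceq S m k" if "a \<le> k" "k \<le> b" for k
    unfolding preceq_iff_lex key_def[symmetric] m(3) using that by (intro Min_le) auto
  have "minpos S a b = m"
    unfolding minpos_def
  proof (rule the_equality)
    fix j
    assume "a \<le> j \<and> j \<le> b \<and> (\<forall>k. a \<le> k \<and> k \<le> b \<longrightarrow> preceq S j k)"
    then have "key j = key m"
      using least m by (intro order.antisym) (auto simp: preceq_iff_lex key_def)
    then show "j = m"
      by (simp add: key_def)
  qed (use m least in auto)
  with m least show "a \<le> minpos S a b" "minpos S a b \<le> b"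
    and "\<And>k. a \<le> k \<Longrightarrow> k \<le> b \<Longrightarrow> preceq S (minpos S a b) k"
    by auto
qed

lemma left_min_Suc_iff_preceq_minpos:
  assumes "a \<le> b"
  shows "left_min S a (Suc b) \<longleftrightarrow> preceq S (Suc b) (minpos S a b)"
proof -
  have "at S (minpos S a b) \<le> at S j" if "a \<le> j" "j \<le> b" for j
    using minpos(3)[OF assms that, where S=S] by (auto simp: preceq_iff_lex)
  then show ?thesis
    using minpos(1,2)[OF assms, where S=S] preceq_greater_iff[of "minpos S a b" "Suc b" S]
    by (auto simp: left_min_def less_Suc_eq_le intro: order.strict_trans2)
qed

lemma minpos_eq_Max_left_min:
  assumes "a \<le> b"
  shows "minpos S a b = Max {k. a \<le> k \<and> k \<le> b \<and> left_min S a k}"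
proof (rule sym, rule Max_eqI)
  show "finite {k. a \<le> k \<and> k \<le> b \<and> left_min S a k}"
    by (rule finite_subset[of _ "{..b}"]) auto
  have "left_min S a (minpos S a b)"
    unfolding left_min_def
  proof (intro allI impI)
    fix j
    assume "a \<le> j \<and> j < minpos S a b"
    with minpos[OF assms, where S=S] show "at S (minpos S a b) < at S j"
      by (simp add: preceq_greater_iff[symmetric])
  qed
  then show "minpos S a b \<in> {k. a \<le> k \<and> k \<le> b \<and> left_min S a k}"
    using minpos(1,2)[OF assms, where S=S] by simp
  fix k
  assume k: "k \<in> {k. a \<le> k \<and> k \<le> b \<and> left_min S a k}"
  show "k \<le> minpos S a b"
  proof (rule ccontr)
    assume "\<not> k \<le> minpos S a b"
    then have "at S k < at S (minpos S a b)"
      using k minpos(1)[OF assms, where S=S] by (auto simp: left_min_def)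
    moreover have "preceq S (minpos S a b) k"
      using k minpos(3)[OF assms, where S=S] by auto
    ultimately show False
      by (auto simp: preceq_iff_lex)
  qed
qed

lemma minpos_cong_PP:
  assumes "1 \<le> a" "a \<le> b" "\<And>i. a \<le> i \<Longrightarrow> i \<le> b \<Longrightarrow> PP P i = PP S i"
  shows "minpos P a b = minpos S a b"
proof -
  have "{k. a \<le> k \<and> k \<le> b \<and> left_min P a k} = {k. a \<le> k \<and> k \<le> b \<and> left_min S a k}"
    using assms by (auto simp: left_min_iff_PP)
  then show ?thesis
    using assms(2) by (simp add: minpos_eq_Max_left_min)
qed

lemma PP_Suc_eq_iff:
  assumes agree: "\<And>i. 1 \<le> i \<Longrightarrow> i \<le> q \<Longrightarrow> PP P i = PP S i"
  shows "PP P (Suc q) = PP S (Suc q)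
    \<longleftrightarrow> preceq S (PP P (Suc q)) (Suc q) \<and> preceq S (Suc q) (PC P (Suc q))"
proof (cases "q = 0")
  case True
  then have "PP P (Suc q) = Suc q" "PP S (Suc q) = Suc q" "PC P (Suc q) = Suc q"
    by (simp_all add: PP_def PC_def)
  then show ?thesis
    by (simp add: preceq_def)
next
  case q: False
  show ?thesis
  proof (cases P "Suc q" rule: PP_cases)
    case 1
    have PC: "PC P (Suc q) = minpos S 1 q"
      using 1 q minpos_cong_PP[of 1 q P S] agree by (simp add: PC_def)
    have "PP S (Suc q) = Suc q \<longleftrightarrow> preceq S (Suc q) (minpos S 1 q)"
      using q by (simp add: PP_eq_self_iff left_min_Suc_iff_preceq_minpos)
    then show ?thesis
      unfolding 1(1) PC by (auto simp: preceq_def)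
  next
    case 2
    define p where "p = PP P (Suc q)"
    have parent: "PP S (Suc q) = p \<longleftrightarrow> preceq S p (Suc q) \<and> left_min S (p + 1) (Suc q)"
      using 2 PP_eq_iff[of p "Suc q" S] by (simp add: p_def preceq_def prec_less_iff)
    show ?thesis
    proof (cases "p = q")
      case True
      then have "PC P (Suc q) = Suc q"
        using q by (simp add: PC_def p_def)
      then show ?thesis
        using parent True by (auto simp: p_def left_min_def preceq_def)
    next
      case False
      then have "p + 1 \<le> q"
        using 2 by (simp add: p_def)
      moreover have "PC P (Suc q) = minpos S (p + 1) q"
        using False 2 q minpos_cong_PP[of "p + 1" q P S] agree \<open>p + 1 \<le> q\<close>
        by (simp add: PC_def p_def[symmetric])
      ultimately show ?thesis
        using parent by (auto simp: p_def[symmetric] left_min_Suc_iff_preceq_minpos)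
    qed
  qed
qed

theorem theorem1:
  fixes P S :: "'a::linorder list" and q :: nat
  assumes "length P \<ge> q + 1" and "length S \<ge> q + 1"
    and "\<forall>i. 1 \<le> i \<and> i \<le> q \<longrightarrow> PP (take q P) i = PP (take q S) i"
  shows "(\<forall>i. 1 \<le> i \<and> i \<le> q + 1 \<longrightarrow> PP (take (q + 1) P) i = PP (take (q + 1) S) i)
         \<longleftrightarrow> (preceq S (PP P (q + 1)) (q + 1) \<and> preceq S (q + 1) (PC P (q + 1)))"
proof -
  have agree: "PP P i = PP S i" if "1 \<le> i" "i \<le> q" for i
    using assms(3) that by (simp add: PP_take)
  have "(\<forall>i. 1 \<le> i \<and> i \<le> q + 1 \<longrightarrow> PP (take (q + 1) P) i = PP (take (q + 1) S) i)
        \<longleftrightarrow> PP P (Suc q) = PP S (Suc q)"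
    using agree by (auto simp: PP_take le_Suc_eq)
  with PP_Suc_eq_iff[OF agree] show ?thesis
    by simp
qed

end
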